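(* For all $k,j,n,m\in\mathbb{N}_0$ and $x,y\in[0,1]$, $$B_{k,j;n,m}(x,y;q)=[x]_q^k[y]_q^j\sum_{l=0}^{n}\sum_{r=0}^{m}\binom{n}{l}\binom{m}{r}B_l^{(k)}\bigl([1-x]_q\bigr)\,B_r^{(j)}\bigl([1-y]_q\bigr)\,S(n-l,k)\,S(m-r,j).$$
   Context: Fix $q\in(0,1)$. For real $x$ put $[x]_q=\frac{1-q^x}{1-q}$. For $k,j,n,m\in\mathbb{Z}$ and $x,y\in[0,1]$, the modified $q$-Bernstein polynomial of two variables is $B_{k,j;n,m}(x,y;q)=\binom{n}{k}\binom{m}{j}[x]_q^k[y]_q^j[1-x]_q^{n-k}[1-y]_q^{m-j}$ if $0\le k\le n$ and $0\le j\le m$, and $B_{k,j;n,m}(x,y;q)=0$ otherwise. For $k\in\mathbb{N}_0$ the generalized Bernoulli polynomials $B_n^{(k)}(z)$ of order $k$ are defined by $\left(\frac{t}{e^t-1}\right)^k e^{zt}=\sum_{n=0}^\infty B_n^{(k)}(z)\frac{t^n}{n!}$. The Stirling numbers of the second kind $S(n,k)$ are defined by $\frac{(e^t-1)^k}{k!}=\sum_{n=0}^\infty S(n,k)\frac{t^n}{n!}$. *)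

theory Defs
  imports "HOL-Analysis.Analysis" "HOL-Combinatorics.Stirling"
    "HOL-Computational_Algebra.Formal_Power_Series"
begin

definition qnum :: "real \<Rightarrow> real \<Rightarrow> real" where
  "qnum q x = (1 - q powr x) / (1 - q)"

definition qBernstein2 :: "int \<Rightarrow> int \<Rightarrow> int \<Rightarrow> int \<Rightarrow> real \<Rightarrow> real \<Rightarrow> real \<Rightarrow> real" where
  "qBernstein2 k j n m x y q =
     (if 0 \<le> k \<and> k \<le> n \<and> 0 \<le> j \<and> j \<le> m then
        real (nat n choose nat k) * real (nat m choose nat j)
        * qnum q x ^ nat k * qnum q y ^ nat j
        * qnum q (1 - x) ^ nat (n - k) * qnum q (1 - y) ^ nat (m - j)
      else 0)"

definition gen_bernoulli_poly :: "nat \<Rightarrow> nat \<Rightarrow> real \<Rightarrow> real" where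
  "gen_bernoulli_poly k n z =
     fact n * fps_nth ((fps_X / (fps_exp 1 - 1)) ^ k * fps_exp z) n"

end

theory Submission
  imports Defs
begin

(* Write E = e^t - 1 as a formal power series.  The generalized
   Bernoulli polynomials have EGF (t/E)^k e^{zt}, and (E^k)/k! is the EGF of the
   Stirling numbers S(n,k).  Multiplying the two series cancels the factor E^k
   and leaves t^k e^{zt}, whose n-th EGF coefficient is (n choose k) z^(n-k).
   Hence the binomial convolution of B_l^(k)(z) with S(n-l,k) equals
   (n choose k) z^(n-k) for k <= n and 0 otherwise.
   The double sum of the theorem is a product of two such convolutions, one in
   each variable, taken at z = [1-x]_q and z = [1-y]_q; multiplied by
   [x]_q^k [y]_q^j it is exactly the factorized q-Bernstein polynomial. *)

lemma fps_nth_exp_minus_one_power: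
  "fps_nth ((fps_exp (1::'a::field_char_0) - 1) ^ k) n
     = fact k * of_nat (Stirling n k) / fact n"
proof (induction k arbitrary: n)
  case 0
  then show ?case by (cases n) auto
next
  case (Suc k)
  define E :: "'a fps" where "E = fps_exp 1 - 1"
  have IH: "\<And>n. fps_nth (E ^ k) n = fact k * of_nat (Stirling n k) / fact n"
    using Suc unfolding E_def .
  text \<open>E' = E + 1, so the power E^(k+1) satisfies a first-order linear ODE.\<close>
  have deriv: "fps_deriv (E ^ Suc k) = of_nat (Suc k) * (E ^ Suc k + E ^ k)"
    unfolding fps_deriv_power' E_def by (simp add: algebra_simps)
  show ?case unfolding E_def[symmetric]
  proof (induction n)
    case 0
    then show ?case by (simp add: E_def)
  next
    case (Suc n)
    have "of_nat (n + 1) * fps_nth (E ^ Suc k) (n + 1) = fps_nth (fps_deriv (E ^ Suc k)) n"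
      by (rule fps_deriv_nth[symmetric])
    also have "\<dots> = of_nat (Suc k) * (fps_nth (E ^ Suc k) n + fps_nth (E ^ k) n)"
      unfolding deriv by (simp add: fps_of_nat[symmetric])
    also have "\<dots> = of_nat (Suc k) * (fact (Suc k) * of_nat (Stirling n (Suc k)) / fact n
                      + fact k * of_nat (Stirling n k) / fact n)"
      using Suc.IH IH by simp
    also have "\<dots> = of_nat (n + 1) * (fact (Suc k) * of_nat (Stirling (Suc n) (Suc k)) / fact (Suc n))"
      by (simp add: field_simps del: of_nat_Suc of_nat_add fact_Suc) (simp add: algebra_simps)
    finally show ?case
      by (metis Suc_eq_plus1 mult_cancel_left of_nat_eq_0_iff nat.distinct(1))
  qed
qed

text \<open>Since e^t - 1 has subdegree 1, dividing t by it and multiplying back is exact;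
  this is what makes the Bernoulli and Stirling generating functions cancel.\<close>
lemma fps_X_div_exp_minus_one_cancel:
  "fps_X / (fps_exp (1::'a::field_char_0) - 1) * (fps_exp 1 - 1) = fps_X"
proof (rule fps_times_divide_eq)
  have coeff1: "fps_nth (fps_exp (1::'a) - 1) 1 = 1" by simp
  moreover have "fps_nth (fps_exp (1::'a) - 1) 0 = 0" by simp
  ultimately have "subdegree (fps_exp (1::'a) - 1) = 1" by (intro subdegreeI) auto
  then show "subdegree (fps_exp (1::'a) - 1) \<le> subdegree (fps_X :: 'a fps)" by simp
  show "fps_exp (1::'a) - 1 \<noteq> 0" using coeff1 by auto
qed

lemma gen_bernoulli_Stirling_convolution:
  "(\<Sum>l = 0..n. real (n choose l) * gen_bernoulli_poly k l z * real (Stirling (n - l) k))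
   = (if k \<le> n then real (n choose k) * z ^ (n - k) else 0)"
proof -
  define E :: "real fps" where "E = fps_exp 1 - 1"
  define A where "A = (fps_X / E) ^ k * fps_exp z"
  have "A * E ^ k = (fps_X / E * E) ^ k * fps_exp z"
    unfolding A_def by (simp add: power_mult_distrib mult_ac)
  then have product: "A * E ^ k = fps_X ^ k * fps_exp z"
    unfolding E_def fps_X_div_exp_minus_one_cancel .
  have "fps_nth (A * E ^ k) n = (\<Sum>l = 0..n. fps_nth A l * fps_nth (E ^ k) (n - l))"
    by (rule fps_mult_nth)
  also have "\<dots> = (\<Sum>l = 0..n. gen_bernoulli_poly k l z / fact l
                     * (fact k * real (Stirling (n - l) k) / fact (n - l)))"
    by (intro sum.cong refl)
       (simp add: A_def E_def gen_bernoulli_poly_def fps_nth_exp_minus_one_power)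
  also have "\<dots> = fact k / fact n *
      (\<Sum>l = 0..n. real (n choose l) * gen_bernoulli_poly k l z * real (Stirling (n - l) k))"
    unfolding sum_distrib_left by (intro sum.cong refl) (auto simp: binomial_fact field_simps)
  finally have convolution: "fps_nth (A * E ^ k) n = fact k / fact n *
      (\<Sum>l = 0..n. real (n choose l) * gen_bernoulli_poly k l z * real (Stirling (n - l) k))" .
  have "fps_nth (A * E ^ k) n = (if n < k then 0 else z ^ (n - k) / fact (n - k))"
    unfolding product fps_X_power_mult_nth by simp
  with convolution show ?thesis
    by (cases "k \<le> n") (auto simp: binomial_fact field_simps)
qed

lemma qBernstein2_nat_factorization:
  "qBernstein2 (int k) (int j) (int n) (int m) x y q =
     qnum q x ^ k * qnum q y ^ j *
     ((if k \<le> n then real (n choose k) * qnum q (1 - x) ^ (n - k) else 0) *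
      (if j \<le> m then real (m choose j) * qnum q (1 - y) ^ (m - j) else 0))"
  unfolding qBernstein2_def by (auto simp: nat_diff_distrib)

theorem theorem10:
  fixes q x y :: real and k j n m :: nat
  assumes "0 < q" "q < 1"
    and "0 \<le> x" "x \<le> 1" "0 \<le> y" "y \<le> 1"
  shows "qBernstein2 (int k) (int j) (int n) (int m) x y q =
    qnum q x ^ k * qnum q y ^ j *
    (\<Sum>l = 0..n. \<Sum>r = 0..m.
       real (n choose l) * real (m choose r)
       * gen_bernoulli_poly k l (qnum q (1 - x))
       * gen_bernoulli_poly j r (qnum q (1 - y))
       * real (Stirling (n - l) k) * real (Stirling (m - r) j))"
proof -
  have "(\<Sum>l = 0..n. \<Sum>r = 0..m.
       real (n choose l) * real (m choose r)
       * gen_bernoulli_poly k l (qnum q (1 - x))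
       * gen_bernoulli_poly j r (qnum q (1 - y))
       * real (Stirling (n - l) k) * real (Stirling (m - r) j))
     = (\<Sum>l = 0..n. real (n choose l) * gen_bernoulli_poly k l (qnum q (1 - x)) * real (Stirling (n - l) k))
     * (\<Sum>r = 0..m. real (m choose r) * gen_bernoulli_poly j r (qnum q (1 - y)) * real (Stirling (m - r) j))"
    unfolding sum_product by (intro sum.cong refl) (simp add: mult_ac)
  then show ?thesis
    unfolding qBernstein2_nat_factorization gen_bernoulli_Stirling_convolution by simp
qed

end
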